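(* (1) For every $t\ge0$, $\mathfrak{e}^D_t\in\mathcal{E}(\mathcal{P}^{s+}_{3,5})$, but $\mathfrak{e}^D_t\notin\mathcal{E}(\mathcal{P}^{+}_{3,5})$. (2) If $t>0$, $t\ne1$ and $f\in\mathcal{P}^{s+}_{3,5}$ satisfies $f(t,1,1)=f(1,1,1)=f(0,0,1)=0$, then $f=\lambda\mathfrak{e}^D_t$ for some $\lambda\ge0$. (3) If $f\in\mathcal{P}^{s+}_{3,5}$ satisfies $f(1,1,1)=f_{aa}(1,1,1)=f(0,0,1)=0$, then $f=\lambda\mathfrak{e}^D_1$ for some $\lambda\ge0$; in particular $\mathfrak{e}^D_1=s_1-8s_3\in\mathcal{E}(\mathcal{P}^{s+}_{3,5})$. (4) If $f\in\mathcal{P}^{s+}_{3,5}$ satisfies $f(1,1,1)=f(0,0,1)=f_a(0,0,1)=0$ and $f_{aa}(0,0,1)+f_{ab}(0,0,1)=0$, then $f=\lambda\mathfrak{e}^D_\infty$ for some $\lambda\ge0$; in particular $\mathfrak{e}^D_\infty=s_2-2s_3\in\mathcal{E}(\mathcal{P}^{s+}_{3,5})$.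
   Context: Let $a,b,c$ be variables. For nonnegative integers $m,n$ put $S_{m,n}=a^mb^n+b^mc^n+c^ma^n$, $S_n=S_{n,0}=a^n+b^n+c^n$, $T_{m,n}=S_{m,n}+S_{n,m}$, $U=abc$ (so $S_{1,1}=ab+bc+ca$). Let $\mathcal{H}^s_{3,5}$ be the real vector space of symmetric homogeneous polynomials of degree 5 in $\mathbb{R}[a,b,c]$; it has basis $s_0=S_5-US_{1,1}$, $s_1=T_{4,1}-2US_{1,1}$, $s_2=T_{3,2}-2US_{1,1}$, $s_3=US_2-US_{1,1}$, $s_4=US_{1,1}$. Let $\mathcal{P}^{s+}_{3,5}=\{f\in\mathcal{H}^s_{3,5}: f(a,b,c)\ge 0\text{ for all }a,b,c\ge0\}$, and let $\mathcal{P}^+_{3,5}$ be the cone of all (not necessarily symmetric) real homogeneous quintic forms in $a,b,c$ that are nonnegative on $\mathbb{R}_{\ge0}^3$. For a closed convex cone $\mathcal{P}$, an element $f\in\mathcal{P}\setminus\{0\}$ is extremal if whenever $f=g+h$ with $g,h\in\mathcal{P}$ we have $g,h\in\mathbb{R}_{\ge0}f$; $\mathcal{E}(\mathcal{P})$ is the set of extremal elements. Subscripts denote partial derivatives: $f_a=\partial f/\partial a$, $f_{aa}=\partial^2f/\partial a^2$, $f_{ab}=\partial^2f/\partial a\partial b$, etc. Family D: $\mathfrak{e}^D_t=s_1+(t^2-1)s_2-2(t+1)^2s_3$, and $\mathfrak{e}^D_\infty=s_2-2s_3$. *)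

theory Defs
  imports "HOL-Analysis.Analysis"
begin

type_synonym form3 = "real \<Rightarrow> real \<Rightarrow> real \<Rightarrow> real"

text \<open>Real homogeneous quintic forms in a,b,c, represented as polynomial functions
  (a real polynomial is determined by its function).\<close>
definition quintic_forms :: "form3 set" where
  "quintic_forms = {f. \<exists>C :: nat \<Rightarrow> nat \<Rightarrow> real. \<forall>a b c.
      f a b c = (\<Sum>i\<le>5. \<Sum>j\<le>5 - i. C i j * a ^ i * b ^ j * c ^ (5 - i - j))}"

definition sym_quintic_forms :: "form3 set" where
  "sym_quintic_forms = {f \<in> quintic_forms. \<forall>a b c. f a b c = f b a c \<and> f a b c = f b c a}"

definition nonneg_orthant :: "form3 \<Rightarrow> bool" where
  "nonneg_orthant f \<longleftrightarrow> (\<forall>a b c. a \<ge> 0 \<longrightarrow> b \<ge> 0 \<longrightarrow> c \<ge> 0 \<longrightarrow> f a b c \<ge> 0)"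

definition P_sym_plus :: "form3 set" where
  "P_sym_plus = {f \<in> sym_quintic_forms. nonneg_orthant f}"

definition P_plus :: "form3 set" where
  "P_plus = {f \<in> quintic_forms. nonneg_orthant f}"

definition extremal :: "form3 set \<Rightarrow> form3 \<Rightarrow> bool" where
  "extremal P f \<longleftrightarrow> f \<in> P \<and> f \<noteq> (\<lambda>a b c. 0) \<and>
     (\<forall>g h. g \<in> P \<longrightarrow> h \<in> P \<longrightarrow> f = (\<lambda>a b c. g a b c + h a b c) \<longrightarrow>
        (\<exists>l\<ge>0. g = (\<lambda>a b c. l * f a b c)) \<and> (\<exists>l\<ge>0. h = (\<lambda>a b c. l * f a b c)))"

definition Smn :: "nat \<Rightarrow> nat \<Rightarrow> form3" where
  "Smn m n a b c = a ^ m * b ^ n + b ^ m * c ^ n + c ^ m * a ^ n"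

definition Tmn :: "nat \<Rightarrow> nat \<Rightarrow> form3" where
  "Tmn m n a b c = Smn m n a b c + Smn n m a b c"

definition Uf :: form3 where "Uf a b c = a * b * c"

definition s0 :: form3 where "s0 a b c = Smn 5 0 a b c - Uf a b c * Smn 1 1 a b c"
definition s1 :: form3 where "s1 a b c = Tmn 4 1 a b c - 2 * Uf a b c * Smn 1 1 a b c"
definition s2 :: form3 where "s2 a b c = Tmn 3 2 a b c - 2 * Uf a b c * Smn 1 1 a b c"
definition s3 :: form3 where "s3 a b c = Uf a b c * Smn 2 0 a b c - Uf a b c * Smn 1 1 a b c"
definition s4 :: form3 where "s4 a b c = Uf a b c * Smn 1 1 a b c"

definition eD :: "real \<Rightarrow> form3" where
  "eD t a b c = s1 a b c + (t ^ 2 - 1) * s2 a b c - 2 * (t + 1) ^ 2 * s3 a b c"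

definition eD_inf :: form3 where
  "eD_inf a b c = s2 a b c - 2 * s3 a b c"

definition d_a :: "form3 \<Rightarrow> form3" where
  "d_a f a b c = deriv (\<lambda>x. f x b c) a"
definition d_b :: "form3 \<Rightarrow> form3" where
  "d_b f a b c = deriv (\<lambda>y. f a y c) b"

end

theory Submission
  imports Defs
begin

text \<open>A symmetric quintic is a combination of the five monomial symmetric functions. Vanishing
  at \<open>(1,1,1)\<close> and \<open>(0,0,1)\<close> leaves three parameters, and on the line \<open>(z,1,1)\<close> such a form
  equals \<open>(z - 1)\<^sup>2 q(z)\<close> for a quadratic \<open>q\<close> that determines it; for \<open>eD t\<close> it is
  \<open>q(z) = 2(z - t)\<^sup>2\<close>, for \<open>eD_inf\<close> the constant \<open>2\<close>. A form of the cone below \<open>eD t\<close>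
  (resp. \<open>eD_inf\<close>) therefore has \<open>0 \<le> q(z) \<le> 2(z - t)\<^sup>2\<close> (resp. \<open>\<le> 2\<close>) for \<open>z \<ge> 0\<close>,
  which squeezes \<open>q\<close> into a double root at \<open>t\<close> (resp. degree \<open>0\<close>), i.e. into a multiple of
  \<open>eD t\<close> (resp. \<open>eD_inf\<close>). The same double-root argument at an interior minimum gives the
  characterisations by zeros, while the derivatives at \<open>(0,0,1)\<close> read off the coefficients
  directly. In the full cone \<open>eD t\<close> splits into the three cyclic shifts of the nonnegative,
  non-symmetric form \<open>c (a - b)\<^sup>2 (a + b - (t + 1) c)\<^sup>2\<close>.\<close>

lemma quintic_sum_expand:
  "(\<Sum>i\<le>5. \<Sum>j\<le>5 - i. C i j * a ^ i * b ^ j * c ^ (5 - i - j)) =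
     C 0 0 * c^5 + C 0 1 * b * c^4 + C 0 2 * b^2 * c^3 + C 0 3 * b^3 * c^2 + C 0 4 * b^4 * c
   + C 0 5 * b^5 + C 1 0 * a * c^4 + C 1 1 * a * b * c^3 + C 1 2 * a * b^2 * c^2
   + C 1 3 * a * b^3 * c + C 1 4 * a * b^4 + C 2 0 * a^2 * c^3 + C 2 1 * a^2 * b * c^2
   + C 2 2 * a^2 * b^2 * c + C 2 3 * a^2 * b^3 + C 3 0 * a^3 * c^2 + C 3 1 * a^3 * b * c
   + C 3 2 * a^3 * b^2 + C 4 0 * a^4 * c + C 4 1 * a^4 * b + C 5 0 * (a::real)^5"
  by (simp add: numeral_eq_Suc atMost_Suc algebra_simps)

lemma quintic_forms_diff:
  assumes "f \<in> quintic_forms" "g \<in> quintic_forms"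
  shows "(\<lambda>a b c. f a b c - g a b c) \<in> quintic_forms"
proof -
  obtain C D where
    "\<And>a b c. f a b c = (\<Sum>i\<le>5. \<Sum>j\<le>5 - i. C i j * a ^ i * b ^ j * c ^ (5 - i - j))"
    "\<And>a b c. g a b c = (\<Sum>i\<le>5. \<Sum>j\<le>5 - i. D i j * a ^ i * b ^ j * c ^ (5 - i - j))"
    using assms unfolding quintic_forms_def by blast
  then show ?thesis
    unfolding quintic_forms_def
    by (intro CollectI exI[of _ "\<lambda>i j. C i j - D i j"]) (simp add: sum_subtractf[symmetric] algebra_simps)
qed

definition sym_form :: "real \<Rightarrow> real \<Rightarrow> real \<Rightarrow> real \<Rightarrow> real \<Rightarrow> form3" where
  "sym_form k0 k1 k2 k3 k4 a b c =
     k0 * (a^5 + b^5 + c^5)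
   + k1 * (a^4*b + a*b^4 + b^4*c + b*c^4 + c^4*a + c*a^4)
   + k2 * (a^3*b^2 + a^2*b^3 + b^3*c^2 + b^2*c^3 + c^3*a^2 + c^2*a^3)
   + k3 * (a*b*c * (a^2 + b^2 + c^2))
   + k4 * (a*b*c * (a*b + b*c + c*a))"

lemma sym_form_in_quintic_forms: "sym_form k0 k1 k2 k3 k4 \<in> quintic_forms"
proof -
  define C where "C i j =
    (if (i, j) \<in> {(5,0), (0,5), (0,0)} then k0
     else if (i, j) \<in> {(4,1), (1,4), (4,0), (0,4), (1,0), (0,1)} then k1
     else if (i, j) \<in> {(3,2), (2,3), (3,0), (0,3), (2,0), (0,2)} then k2
     else if (i, j) \<in> {(3,1), (1,3), (1,1)} then k3
     else if (i, j) \<in> {(2,2), (2,1), (1,2)} then k4 else 0)" for i j :: nat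
  have "sym_form k0 k1 k2 k3 k4 a b c = (\<Sum>i\<le>5. \<Sum>j\<le>5 - i. C i j * a ^ i * b ^ j * c ^ (5 - i - j))"
    for a b c
    unfolding quintic_sum_expand C_def by (simp add: sym_form_def) algebra
  then show ?thesis unfolding quintic_forms_def by blast
qed

lemma sym_form_in_sym_quintic_forms: "sym_form k0 k1 k2 k3 k4 \<in> sym_quintic_forms"
  unfolding sym_quintic_forms_def
  using sym_form_in_quintic_forms by (auto simp: sym_form_def algebra_simps)

text \<open>Averaging the coefficient array over the six permutations of the variables.\<close>
lemma sym_quintic_formsE:
  assumes "f \<in> sym_quintic_forms"
  obtains k0 k1 k2 k3 k4 where "f = sym_form k0 k1 k2 k3 k4"
proof -
  obtain C where C: "\<And>a b c. f a b c = (\<Sum>i\<le>5. \<Sum>j\<le>5 - i. C i j * a ^ i * b ^ j * c ^ (5 - i - j))"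
    using assms unfolding sym_quintic_forms_def quintic_forms_def by blast
  have swap: "\<And>a b c. f a b c = f b a c" and rotate: "\<And>a b c. f a b c = f b c a"
    using assms unfolding sym_quintic_forms_def by auto
  have "f a b c = sym_form ((C 5 0 + C 0 5 + C 0 0) / 3)
      ((C 4 1 + C 1 4 + C 4 0 + C 0 4 + C 1 0 + C 0 1) / 6)
      ((C 3 2 + C 2 3 + C 3 0 + C 0 3 + C 2 0 + C 0 2) / 6)
      ((C 3 1 + C 1 3 + C 1 1) / 3) ((C 2 2 + C 2 1 + C 1 2) / 3) a b c" (is "_ = ?g a b c") for a b c
  proof -
    have "6 * f a b c = f a b c + f b c a + f c a b + f b a c + f a c b + f c b a"
      using swap rotate by (smt (verit))
    also have "\<dots> = 6 * ?g a b c"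
      unfolding C quintic_sum_expand sym_form_def by algebra
    finally show ?thesis by simp
  qed
  then show ?thesis by (intro that ext)
qed

text \<open>Parametrises the symmetric quintics vanishing at \<open>(1,1,1)\<close> and \<open>(0,0,1)\<close>.\<close>
definition vanishing_form :: "real \<Rightarrow> real \<Rightarrow> real \<Rightarrow> form3" where
  "vanishing_form k1 k2 k3 = sym_form 0 k1 k2 k3 (-2*k1 - 2*k2 - k3)"

definition vanishing_quad :: "real \<Rightarrow> real \<Rightarrow> real \<Rightarrow> real \<Rightarrow> real" where
  "vanishing_quad k1 k2 k3 z = 2*k1*(z + 1)^2 + 2*k2*(z + 1) + k3*z"

lemma sym_quintic_forms_vanishingE:
  assumes "f \<in> sym_quintic_forms" "f 1 1 1 = 0" "f 0 0 1 = 0"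
  obtains k1 k2 k3 where "f = vanishing_form k1 k2 k3"
proof -
  obtain k0 k1 k2 k3 k4 where f: "f = sym_form k0 k1 k2 k3 k4"
    using assms(1) by (rule sym_quintic_formsE)
  have "f 0 0 1 = k0" "f 1 1 1 = 3*k0 + 6*k1 + 6*k2 + 3*k3 + 3*k4"
    unfolding f sym_form_def power_one mult_1_left mult_1_right by simp_all
  with assms(2,3) have "k0 = 0" "k4 = -2*k1 - 2*k2 - k3"
    by simp_all
  with f show ?thesis by (intro that) (simp add: vanishing_form_def)
qed

lemma vanishing_form_line: "vanishing_form k1 k2 k3 z 1 1 = (z - 1)^2 * vanishing_quad k1 k2 k3 z"
  unfolding vanishing_form_def sym_form_def vanishing_quad_def power_one mult_1_left mult_1_right
  by algebra

lemma vanishing_quad_shift: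
  "vanishing_quad k1 k2 k3 (t + u) =
     vanishing_quad k1 k2 k3 t + (4*k1*(t + 1) + 2*k2 + k3) * u + 2*k1 * u^2"
  unfolding vanishing_quad_def by (simp add: algebra_simps power2_eq_square)

lemma vanishing_quad_inverse:
  assumes "w \<noteq> 0"
  shows "w^2 * vanishing_quad k1 k2 k3 (1 / w) = 2*k1 + (4*k1 + 2*k2 + k3) * w + (2*k1 + 2*k2) * w^2"
  using assms unfolding vanishing_quad_def by (simp add: field_simps power2_eq_square)

lemma eD_eq_vanishing_form: "eD t = vanishing_form 1 (t^2 - 1) (-2 * (t + 1)^2)"
  unfolding vanishing_form_def
  by (intro ext) (simp add: eD_def sym_form_def s1_def s2_def s3_def Tmn_def Smn_def Uf_def
      power2_eq_square; algebra)

lemma eD_inf_eq_vanishing_form: "eD_inf = vanishing_form 0 1 (-2)"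
  unfolding vanishing_form_def
  by (intro ext) (simp add: eD_inf_def sym_form_def s2_def s3_def Tmn_def Smn_def Uf_def; algebra)

lemma vanishing_quad_eD: "vanishing_quad 1 (t^2 - 1) (-2 * (t + 1)^2) z = 2 * (z - t)^2"
  unfolding vanishing_quad_def by (simp add: algebra_simps power2_eq_square)

lemma vanishing_form_eq_eD:
  assumes "vanishing_quad k1 k2 k3 t = 0" "4*k1*(t + 1) + 2*k2 + k3 = 0"
  shows "vanishing_form k1 k2 k3 = (\<lambda>a b c. k1 * eD t a b c)"
proof -
  have "k3 = -4*k1*(t + 1) - 2*k2"
    using assms(2) by simp
  with assms(1) have "k2 = k1 * (t^2 - 1)"
    unfolding vanishing_quad_def by (simp add: algebra_simps power2_eq_square)
  with \<open>k3 = _\<close> have "k3 = -2 * k1 * (t + 1)^2"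
    by (simp add: algebra_simps power2_eq_square)
  with \<open>k2 = _\<close> show ?thesis
    unfolding eD_eq_vanishing_form vanishing_form_def sym_form_def by (intro ext) algebra
qed

lemma vanishing_form_eq_eD_inf:
  assumes "k1 = 0" "2*k2 + k3 = 0"
  shows "vanishing_form k1 k2 k3 = (\<lambda>a b c. k2 * eD_inf a b c)"
proof -
  have "k3 = -2 * k2"
    using assms(2) by simp
  with assms(1) show ?thesis
    unfolding eD_inf_eq_vanishing_form vanishing_form_def sym_form_def
    by (intro ext) (simp add: algebra_simps)
qed

lemma nonneg_at_right_0_quadratic:
  fixes A B C :: real
  assumes ev: "\<forall>\<^sub>F u in at_right 0. 0 \<le> A + B*u + C*u^2"
  shows "0 \<le> A" and "A = 0 \<Longrightarrow> 0 \<le> B"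
proof -
  have lim: "((\<lambda>u. P + Q*u + R*u^2) \<longlongrightarrow> P) (at_right 0)" for P Q R :: real
    by (intro tendsto_eq_intros) auto
  show "0 \<le> A"
    by (rule tendsto_lowerbound[OF lim ev trivial_limit_at_right_real])
  assume "A = 0"
  have "\<forall>\<^sub>F u in at_right 0. 0 \<le> B + C*u + 0*u^2"
    using ev eventually_at_right_less
  proof eventually_elim
    case (elim u)
    with \<open>A = 0\<close> have "0 \<le> u * (B + C*u)" by (simp add: algebra_simps power2_eq_square)
    with \<open>0 < u\<close> show ?case by (simp add: zero_le_mult_iff)
  qed
  then show "0 \<le> B"
    by (rule tendsto_lowerbound[OF lim _ trivial_limit_at_right_real])
qed

lemma squeeze_at_right_0_quadratic:
  fixes A B C K :: real
  assumes "\<forall>\<^sub>F u in at_right 0. 0 \<le> A + B*u + C*u^2 \<and> A + B*u + C*u^2 \<le> K*u^2"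
  shows "A = 0" and "B = 0"
proof -
  have lower: "\<forall>\<^sub>F u in at_right 0. 0 \<le> A + B*u + C*u^2"
    using assms by eventually_elim simp
  have upper: "\<forall>\<^sub>F u in at_right 0. 0 \<le> -A + -B*u + (K - C)*u^2"
    using assms by eventually_elim (simp add: algebra_simps)
  show "A = 0"
    using nonneg_at_right_0_quadratic(1)[OF lower] nonneg_at_right_0_quadratic(1)[OF upper] by simp
  then show "B = 0"
    using nonneg_at_right_0_quadratic(2)[OF lower] nonneg_at_right_0_quadratic(2)[OF upper] by simp
qed

lemma extremalI:
  assumes "f \<in> P" "f \<noteq> (\<lambda>a b c. 0)"
    and face: "\<And>g h. g \<in> P \<Longrightarrow> h \<in> P \<Longrightarrow> f = (\<lambda>a b c. g a b c + h a b c) \<Longrightarrow>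
                 \<exists>l\<ge>0. g = (\<lambda>a b c. l * f a b c)"
  shows "extremal P f"
proof -
  have "(\<exists>l\<ge>0. g = (\<lambda>a b c. l * f a b c)) \<and> (\<exists>l\<ge>0. h = (\<lambda>a b c. l * f a b c))"
    if "g \<in> P" "h \<in> P" "f = (\<lambda>a b c. g a b c + h a b c)" for g h
    using that face[of g h] face[of h g] by (simp add: add.commute)
  with assms(1,2) show ?thesis
    unfolding extremal_def by blast
qed

lemma P_sym_plus_summand:
  assumes "g \<in> P_sym_plus" "h \<in> P_sym_plus" "f = (\<lambda>a b c. g a b c + h a b c)"
    and "0 \<le> a" "0 \<le> b" "0 \<le> c"
  shows "0 \<le> g a b c" and "g a b c \<le> f a b c"
  using assms unfolding P_sym_plus_def nonneg_orthant_def by auto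

lemma nonneg_orthant_scaled_imp_nonneg:
  assumes "nonneg_orthant (\<lambda>a b c. l * e a b c)" "0 \<le> a" "0 \<le> b" "0 \<le> c" "0 < e a b c"
  shows "0 \<le> l"
  using assms unfolding nonneg_orthant_def by (meson zero_le_mult_iff not_le)

definition eD_summand :: "real \<Rightarrow> form3" where
  "eD_summand t a b c = c * (a - b)^2 * (a + b - (t + 1) * c)^2"

lemma eD_eq_sum_eD_summand: "eD t a b c = eD_summand t a b c + eD_summand t b c a + eD_summand t c a b"
  unfolding eD_eq_vanishing_form vanishing_form_def sym_form_def eD_summand_def by algebra

lemma eD_summand_nonneg: "0 \<le> c \<Longrightarrow> 0 \<le> eD_summand t a b c"
  unfolding eD_summand_def by simp

lemma eD_summand_in_quintic_forms: "eD_summand t \<in> quintic_forms"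
proof -
  define C where "C i j =
    (if (i, j) \<in> {(4,0), (0,4)} then 1 else if (i, j) = (2,2) then -2
     else if (i, j) \<in> {(3,0), (0,3)} then -2*(t + 1) else if (i, j) \<in> {(2,1), (1,2)} then 2*(t + 1)
     else if (i, j) \<in> {(2,0), (0,2)} then (t + 1)^2 else if (i, j) = (1,1) then -2*(t + 1)^2 else 0)"
    for i j :: nat
  have "eD_summand t a b c = (\<Sum>i\<le>5. \<Sum>j\<le>5 - i. C i j * a ^ i * b ^ j * c ^ (5 - i - j))" for a b c
    unfolding quintic_sum_expand C_def by (simp add: eD_summand_def) algebra
  then show ?thesis unfolding quintic_forms_def by blast
qed

lemma eD_in_P_sym_plus: "eD t \<in> P_sym_plus"
  unfolding P_sym_plus_def nonneg_orthant_def
proof (intro CollectI conjI allI impI)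
  show "eD t \<in> sym_quintic_forms"
    unfolding eD_eq_vanishing_form vanishing_form_def by (rule sym_form_in_sym_quintic_forms)
  fix a b c :: real assume "0 \<le> a" "0 \<le> b" "0 \<le> c"
  then show "0 \<le> eD t a b c"
    unfolding eD_eq_sum_eD_summand by (intro add_nonneg_nonneg eD_summand_nonneg)
qed

lemma eD_inf_eq_sum_squares: "eD_inf a b c = a^3 * (b - c)^2 + b^3 * (c - a)^2 + c^3 * (a - b)^2"
  unfolding eD_inf_eq_vanishing_form vanishing_form_def sym_form_def by algebra

lemma eD_inf_in_P_sym_plus: "eD_inf \<in> P_sym_plus"
  unfolding P_sym_plus_def nonneg_orthant_def
proof (intro CollectI conjI allI impI)
  show "eD_inf \<in> sym_quintic_forms"
    unfolding eD_inf_eq_vanishing_form vanishing_form_def by (rule sym_form_in_sym_quintic_forms)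
  fix a b c :: real assume "0 \<le> a" "0 \<le> b" "0 \<le> c"
  then show "0 \<le> eD_inf a b c"
    unfolding eD_inf_eq_sum_squares by (intro add_nonneg_nonneg mult_nonneg_nonneg) auto
qed

lemma eD_pos: "0 \<le> t \<Longrightarrow> 0 < eD t 1 2 0"
  unfolding eD_eq_sum_eD_summand eD_summand_def by (intro add_nonneg_pos) auto

lemma eD_inf_pos: "0 < eD_inf 1 1 0"
  unfolding eD_inf_eq_sum_squares by simp

lemma vanishing_quad_nonneg:
  assumes "nonneg_orthant (vanishing_form k1 k2 k3)" "0 \<le> z" "z \<noteq> 1"
  shows "0 \<le> vanishing_quad k1 k2 k3 z"
proof -
  have "0 \<le> (z - 1)^2 * vanishing_quad k1 k2 k3 z"
    using assms(1,2) unfolding nonneg_orthant_def vanishing_form_line[symmetric] by simp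
  with assms(3) show ?thesis by (simp add: zero_le_mult_iff)
qed

lemma vanishing_form_double_root:
  assumes nonneg: "nonneg_orthant (vanishing_form k1 k2 k3)"
    and "0 < t" and root: "vanishing_quad k1 k2 k3 t = 0"
  shows "\<exists>l\<ge>0. vanishing_form k1 k2 k3 = (\<lambda>a b c. l * eD t a b c)"
proof -
  define D where "D = 4*k1*(t + 1) + 2*k2 + k3"
  have shift: "vanishing_quad k1 k2 k3 (t + u) = 0 + D*u + 2*k1*u^2" for u
    unfolding vanishing_quad_shift root D_def by simp
  have right: "\<forall>\<^sub>F u in at_right 0. 0 \<le> 0 + D*u + 2*k1*u^2"
    using eventually_at_right_less eventually_neq_at_within[of "1 - t"]
  proof eventually_elim
    case (elim u)
    then show ?case
      using vanishing_quad_nonneg[OF nonneg, of "t + u"] \<open>0 < t\<close> unfolding shift by simp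
  qed
  have "\<forall>\<^sub>F u in at_right 0. u < t"
    unfolding eventually_at_right_field using \<open>0 < t\<close> by blast
  then have left: "\<forall>\<^sub>F u in at_right 0. 0 \<le> 0 + (-D)*u + 2*k1*u^2"
    using eventually_neq_at_within[of "t - 1"]
  proof eventually_elim
    case (elim u)
    then show ?case
      using vanishing_quad_nonneg[OF nonneg, of "t + - u"] \<open>0 < t\<close> unfolding shift by simp
  qed
  have "D = 0"
    using nonneg_at_right_0_quadratic(2)[OF right] nonneg_at_right_0_quadratic(2)[OF left] by simp
  then have eq: "vanishing_form k1 k2 k3 = (\<lambda>a b c. k1 * eD t a b c)"
    using vanishing_form_eq_eD[OF root] unfolding D_def by blast
  have "0 \<le> k1"
    using nonneg eD_pos \<open>0 < t\<close> unfolding eq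
    by (intro nonneg_orthant_scaled_imp_nonneg[of k1 "eD t" 1 2 0]) auto
  with eq show ?thesis by blast
qed

lemma vanishing_form_below_eD:
  assumes nonneg: "nonneg_orthant (vanishing_form k1 k2 k3)" and "0 \<le> t"
    and below: "\<And>a b c. 0 \<le> a \<Longrightarrow> 0 \<le> b \<Longrightarrow> 0 \<le> c \<Longrightarrow> vanishing_form k1 k2 k3 a b c \<le> eD t a b c"
  shows "\<exists>l\<ge>0. vanishing_form k1 k2 k3 = (\<lambda>a b c. l * eD t a b c)"
proof -
  let ?G = "vanishing_quad k1 k2 k3" and ?D = "4*k1*(t + 1) + 2*k2 + k3"
  have above: "?G z \<le> 2 * (z - t)^2" if "0 \<le> z" "z \<noteq> 1" for z
  proof -
    have "(z - 1)^2 * ?G z \<le> (z - 1)^2 * (2 * (z - t)^2)"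
      using below[of z 1 1] that
      unfolding vanishing_form_line eD_eq_vanishing_form vanishing_quad_eD by simp
    with that(2) show ?thesis by simp
  qed
  have "\<forall>\<^sub>F u in at_right 0. 0 \<le> ?G t + ?D*u + (2*k1)*u^2 \<and> ?G t + ?D*u + (2*k1)*u^2 \<le> 2*u^2"
    using eventually_at_right_less eventually_neq_at_within[of "1 - t"]
  proof eventually_elim
    case (elim u)
    then show ?case
      using vanishing_quad_nonneg[OF nonneg, of "t + u"] \<open>0 \<le> t\<close> above[of "t + u"]
      unfolding vanishing_quad_shift by simp
  qed
  then have "?G t = 0" "?D = 0"
    by (rule squeeze_at_right_0_quadratic)+
  then have eq: "vanishing_form k1 k2 k3 = (\<lambda>a b c. k1 * eD t a b c)"
    by (rule vanishing_form_eq_eD)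
  have "0 \<le> k1"
    using nonneg eD_pos \<open>0 \<le> t\<close> unfolding eq
    by (intro nonneg_orthant_scaled_imp_nonneg[of k1 "eD t" 1 2 0]) auto
  with eq show ?thesis by blast
qed

lemma vanishing_form_below_eD_inf:
  assumes nonneg: "nonneg_orthant (vanishing_form k1 k2 k3)"
    and below: "\<And>a b c. 0 \<le> a \<Longrightarrow> 0 \<le> b \<Longrightarrow> 0 \<le> c \<Longrightarrow> vanishing_form k1 k2 k3 a b c \<le> eD_inf a b c"
  shows "\<exists>l\<ge>0. vanishing_form k1 k2 k3 = (\<lambda>a b c. l * eD_inf a b c)"
proof -
  let ?G = "vanishing_quad k1 k2 k3"
  have above: "?G z \<le> 2" if "0 \<le> z" "z \<noteq> 1" for z
  proof -
    have "(z - 1)^2 * ?G z \<le> (z - 1)^2 * 2"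
      using below[of z 1 1] that
      unfolding vanishing_form_line eD_inf_eq_vanishing_form by (simp add: vanishing_quad_def)
    with that(2) show ?thesis by simp
  qed
  \<comment> \<open>boundedness of \<open>?G\<close> at infinity, read off at \<open>z = 1/w\<close> with \<open>w \<rightarrow> 0\<^sup>+\<close>\<close>
  have "\<forall>\<^sub>F w in at_right 0.
          0 \<le> 2*k1 + (4*k1 + 2*k2 + k3)*w + (2*k1 + 2*k2)*w^2 \<and>
          2*k1 + (4*k1 + 2*k2 + k3)*w + (2*k1 + 2*k2)*w^2 \<le> 2*w^2"
    using eventually_at_right_less eventually_neq_at_within[of 1]
  proof eventually_elim
    case (elim w)
    then have "0 \<le> w^2 * ?G (1 / w)" "w^2 * ?G (1 / w) \<le> w^2 * 2"
      using vanishing_quad_nonneg[OF nonneg, of "1 / w"] above[of "1 / w"] by simp_all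
    with elim(1) show ?case
      unfolding vanishing_quad_inverse[OF less_imp_neq[OF elim(1), symmetric]] by simp
  qed
  then have "2*k1 = 0" "4*k1 + 2*k2 + k3 = 0"
    by (rule squeeze_at_right_0_quadratic)+
  then have eq: "vanishing_form k1 k2 k3 = (\<lambda>a b c. k2 * eD_inf a b c)"
    by (intro vanishing_form_eq_eD_inf) simp_all
  have "0 \<le> k2"
    using nonneg eD_inf_pos unfolding eq
    by (intro nonneg_orthant_scaled_imp_nonneg[of k2 eD_inf 1 1 0]) auto
  with eq show ?thesis by blast
qed

lemma P_sym_plus_summand_vanishingE:
  assumes "g \<in> P_sym_plus" "h \<in> P_sym_plus" "e = (\<lambda>a b c. g a b c + h a b c)"
    and "e 1 1 1 = 0" "e 0 0 1 = 0"
  obtains k1 k2 k3 where "g = vanishing_form k1 k2 k3" "nonneg_orthant (vanishing_form k1 k2 k3)"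
    and "\<And>a b c. 0 \<le> a \<Longrightarrow> 0 \<le> b \<Longrightarrow> 0 \<le> c \<Longrightarrow> vanishing_form k1 k2 k3 a b c \<le> e a b c"
proof -
  have "0 \<le> g 1 1 1" "g 1 1 1 \<le> e 1 1 1" "0 \<le> g 0 0 1" "g 0 0 1 \<le> e 0 0 1"
    using P_sym_plus_summand[OF assms(1-3)] by simp_all
  with assms(4,5) have "g 1 1 1 = 0" "g 0 0 1 = 0"
    by simp_all
  with assms(1) obtain k1 k2 k3 where "g = vanishing_form k1 k2 k3"
    unfolding P_sym_plus_def by (blast elim: sym_quintic_forms_vanishingE)
  with assms(1) P_sym_plus_summand(2)[OF assms(1-3)] show ?thesis
    by (intro that) (auto simp: P_sym_plus_def)
qed

lemma extremal_eD: "0 \<le> t \<Longrightarrow> extremal P_sym_plus (eD t)"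
proof (rule extremalI)
  assume "0 \<le> t"
  show "eD t \<in> P_sym_plus" by (rule eD_in_P_sym_plus)
  show "eD t \<noteq> (\<lambda>a b c. 0)"
    using eD_pos[OF \<open>0 \<le> t\<close>] by (metis less_irrefl)
  fix g h assume "g \<in> P_sym_plus" "h \<in> P_sym_plus" "eD t = (\<lambda>a b c. g a b c + h a b c)"
  moreover have "eD t 1 1 1 = 0" "eD t 0 0 1 = 0"
    unfolding eD_eq_sum_eD_summand eD_summand_def by simp_all
  ultimately obtain k1 k2 k3 where "g = vanishing_form k1 k2 k3"
    and "nonneg_orthant (vanishing_form k1 k2 k3)"
    and "\<And>a b c. 0 \<le> a \<Longrightarrow> 0 \<le> b \<Longrightarrow> 0 \<le> c \<Longrightarrow> vanishing_form k1 k2 k3 a b c \<le> eD t a b c"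
    by (rule P_sym_plus_summand_vanishingE) blast
  then show "\<exists>l\<ge>0. g = (\<lambda>a b c. l * eD t a b c)"
    using vanishing_form_below_eD[OF _ \<open>0 \<le> t\<close>] by simp
qed

lemma extremal_eD_inf: "extremal P_sym_plus eD_inf"
proof (rule extremalI)
  show "eD_inf \<in> P_sym_plus" by (rule eD_inf_in_P_sym_plus)
  show "eD_inf \<noteq> (\<lambda>a b c. 0)"
    using eD_inf_pos by (metis less_irrefl)
  fix g h assume "g \<in> P_sym_plus" "h \<in> P_sym_plus" "eD_inf = (\<lambda>a b c. g a b c + h a b c)"
  moreover have "eD_inf 1 1 1 = 0" "eD_inf 0 0 1 = 0"
    unfolding eD_inf_eq_sum_squares by simp_all
  ultimately obtain k1 k2 k3 where "g = vanishing_form k1 k2 k3"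
    and "nonneg_orthant (vanishing_form k1 k2 k3)"
    and "\<And>a b c. 0 \<le> a \<Longrightarrow> 0 \<le> b \<Longrightarrow> 0 \<le> c \<Longrightarrow> vanishing_form k1 k2 k3 a b c \<le> eD_inf a b c"
    by (rule P_sym_plus_summand_vanishingE) blast
  then show "\<exists>l\<ge>0. g = (\<lambda>a b c. l * eD_inf a b c)"
    using vanishing_form_below_eD_inf by simp
qed

lemma not_extremal_P_plus_eD:
  assumes "0 \<le> t"
  shows "\<not> extremal P_plus (eD t)"
proof
  assume extremal: "extremal P_plus (eD t)"
  define h where "h a b c = eD t a b c - eD_summand t a b c" for a b c
  have "eD t \<in> quintic_forms"
    unfolding eD_eq_vanishing_form vanishing_form_def by (rule sym_form_in_quintic_forms)
  then have "h \<in> quintic_forms"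
    unfolding h_def by (rule quintic_forms_diff[OF _ eD_summand_in_quintic_forms])
  moreover have "nonneg_orthant h"
    unfolding nonneg_orthant_def h_def
    by (auto simp: eD_eq_sum_eD_summand intro!: add_nonneg_nonneg eD_summand_nonneg)
  ultimately have "h \<in> P_plus"
    unfolding P_plus_def by blast
  moreover have "eD_summand t \<in> P_plus"
    unfolding P_plus_def nonneg_orthant_def using eD_summand_in_quintic_forms eD_summand_nonneg by blast
  moreover have "eD t = (\<lambda>a b c. eD_summand t a b c + h a b c)"
    unfolding h_def by simp
  ultimately obtain l where l: "eD_summand t = (\<lambda>a b c. l * eD t a b c)"
    using extremal unfolding extremal_def by blast
  \<comment> \<open>the summand vanishes at \<open>(1,2,0)\<close>, where \<open>eD t\<close> does not, but not at \<open>(t+2,0,1)\<close>\<close>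
  have "l * eD t 1 2 0 = 0"
    using fun_cong[OF fun_cong[OF fun_cong[OF l, of 1], of 2], of 0] by (simp add: eD_summand_def)
  with eD_pos[OF assms] have "l = 0" by simp
  moreover have "eD_summand t (t + 2) 0 1 = (t + 2)^2"
    unfolding eD_summand_def by simp
  ultimately show False
    using fun_cong[OF fun_cong[OF fun_cong[OF l, of "t + 2"], of 0], of 1] assms by simp
qed

lemma d_a_eqI: "((\<lambda>x. f x b c) has_real_derivative D) (at a) \<Longrightarrow> d_a f a b c = D"
  unfolding d_a_def by (rule DERIV_imp_deriv)

lemma d_b_eqI: "((\<lambda>y. f a y c) has_real_derivative D) (at b) \<Longrightarrow> d_b f a b c = D"
  unfolding d_b_def by (rule DERIV_imp_deriv)

lemma vanishing_form_derivs_001: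
  shows "d_a (vanishing_form k1 k2 k3) 0 0 1 = k1"
    and "d_a (d_a (vanishing_form k1 k2 k3)) 0 0 1 = 2 * k2"
    and "d_a (d_b (vanishing_form k1 k2 k3)) 0 0 1 = k3"
proof -
  let ?f = "vanishing_form k1 k2 k3" and ?k4 = "-2*k1 - 2*k2 - k3"
  have da: "d_a ?f x 0 1 = k1 * (1 + 4*x^3) + k2 * (2*x + 3*x^2)" for x
    by (rule d_a_eqI) (auto simp: vanishing_form_def sym_form_def algebra_simps
        intro!: derivative_eq_intros)
  have db: "d_b ?f x 0 1 = k1 * (x^4 + 1) + k3 * (x^3 + x) + ?k4 * x^2" for x
    by (rule d_b_eqI) (auto simp: vanishing_form_def sym_form_def algebra_simps power2_eq_square
        power3_eq_cube intro!: derivative_eq_intros)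
  show "d_a ?f 0 0 1 = k1"
    using da[of 0] by simp
  show "d_a (d_a ?f) 0 0 1 = 2 * k2"
    by (rule d_a_eqI) (unfold da, auto intro!: derivative_eq_intros)
  show "d_a (d_b ?f) 0 0 1 = k3"
    by (rule d_a_eqI) (unfold db, auto intro!: derivative_eq_intros)
qed

lemma vanishing_form_deriv2_111:
  "d_a (d_a (vanishing_form k1 k2 k3)) 1 1 1 = 2 * vanishing_quad k1 k2 k3 1"
proof -
  let ?G = "vanishing_quad k1 k2 k3" and ?G' = "\<lambda>x. 4*k1*(x + 1) + 2*k2 + k3"
  have G_deriv: "(?G has_real_derivative ?G' x) (at x)" for x
    unfolding vanishing_quad_def by (auto intro!: derivative_eq_intros simp: algebra_simps)
  have da: "d_a (vanishing_form k1 k2 k3) x 1 1 = 2*(x - 1) * ?G x + (x - 1)^2 * ?G' x" for x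
    by (rule d_a_eqI) (unfold vanishing_form_line, auto intro!: derivative_eq_intros G_deriv)
  show ?thesis
    unfolding vanishing_quad_def
    by (rule d_a_eqI) (unfold da vanishing_quad_def, auto intro!: derivative_eq_intros)
qed

lemma P_sym_plus_vanishingE:
  assumes "f \<in> P_sym_plus" "f 1 1 1 = 0" "f 0 0 1 = 0"
  obtains k1 k2 k3 where "f = vanishing_form k1 k2 k3" "nonneg_orthant (vanishing_form k1 k2 k3)"
  using assms sym_quintic_forms_vanishingE unfolding P_sym_plus_def by blast

lemma P_sym_plus_zeros_t11_imp_eD:
  assumes "f \<in> P_sym_plus" "0 < t" "t \<noteq> 1" "f t 1 1 = 0" "f 1 1 1 = 0" "f 0 0 1 = 0"
  shows "\<exists>l\<ge>0. f = (\<lambda>a b c. l * eD t a b c)"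
proof -
  obtain k1 k2 k3 where f: "f = vanishing_form k1 k2 k3"
    and nonneg: "nonneg_orthant (vanishing_form k1 k2 k3)"
    using assms(1,5,6) by (rule P_sym_plus_vanishingE)
  have "(t - 1)^2 * vanishing_quad k1 k2 k3 t = 0"
    using assms(4) unfolding f vanishing_form_line .
  with assms(3) have "vanishing_quad k1 k2 k3 t = 0"
    by simp
  with nonneg assms(2) show ?thesis
    unfolding f by (rule vanishing_form_double_root)
qed

lemma P_sym_plus_flat_111_imp_eD_1:
  assumes "f \<in> P_sym_plus" "f 1 1 1 = 0" "d_a (d_a f) 1 1 1 = 0" "f 0 0 1 = 0"
  shows "\<exists>l\<ge>0. f = (\<lambda>a b c. l * eD 1 a b c)"
proof -
  obtain k1 k2 k3 where f: "f = vanishing_form k1 k2 k3"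
    and nonneg: "nonneg_orthant (vanishing_form k1 k2 k3)"
    using assms(1,2,4) by (rule P_sym_plus_vanishingE)
  have "vanishing_quad k1 k2 k3 1 = 0"
    using assms(3) unfolding f vanishing_form_deriv2_111 by simp
  with nonneg show ?thesis
    unfolding f by (intro vanishing_form_double_root) simp_all
qed

lemma P_sym_plus_flat_001_imp_eD_inf:
  assumes "f \<in> P_sym_plus" "f 1 1 1 = 0" "f 0 0 1 = 0" "d_a f 0 0 1 = 0"
    and "d_a (d_a f) 0 0 1 + d_a (d_b f) 0 0 1 = 0"
  shows "\<exists>l\<ge>0. f = (\<lambda>a b c. l * eD_inf a b c)"
proof -
  obtain k1 k2 k3 where f: "f = vanishing_form k1 k2 k3"
    and nonneg: "nonneg_orthant (vanishing_form k1 k2 k3)"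
    using assms(1-3) by (rule P_sym_plus_vanishingE)
  have "k1 = 0" "2 * k2 + k3 = 0"
    using assms(4,5) unfolding f vanishing_form_derivs_001 .
  then have eq: "f = (\<lambda>a b c. k2 * eD_inf a b c)"
    unfolding f by (rule vanishing_form_eq_eD_inf)
  have "0 \<le> k2"
    using nonneg eD_inf_pos unfolding f[symmetric] eq
    by (intro nonneg_orthant_scaled_imp_nonneg[of k2 eD_inf 1 1 0]) auto
  with eq show ?thesis by blast
qed

theorem theorem4p4:
  shows
  "(\<forall>t::real. t \<ge> 0 \<longrightarrow> extremal P_sym_plus (eD t) \<and> \<not> extremal P_plus (eD t)) \<and>
   (\<forall>t::real. \<forall>f. t > 0 \<longrightarrow> t \<noteq> 1 \<longrightarrow> f \<in> P_sym_plus \<longrightarrow>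
       f t 1 1 = 0 \<longrightarrow> f 1 1 1 = 0 \<longrightarrow> f 0 0 1 = 0 \<longrightarrow>
       (\<exists>l\<ge>0. f = (\<lambda>a b c. l * eD t a b c))) \<and>
   (\<forall>f. f \<in> P_sym_plus \<longrightarrow> f 1 1 1 = 0 \<longrightarrow> d_a (d_a f) 1 1 1 = 0 \<longrightarrow> f 0 0 1 = 0 \<longrightarrow>
       (\<exists>l\<ge>0. f = (\<lambda>a b c. l * eD 1 a b c))) \<and>
   (\<forall>a b c. eD 1 a b c = s1 a b c - 8 * s3 a b c) \<and> extremal P_sym_plus (eD 1) \<and>
   (\<forall>f. f \<in> P_sym_plus \<longrightarrow> f 1 1 1 = 0 \<longrightarrow> f 0 0 1 = 0 \<longrightarrow> d_a f 0 0 1 = 0 \<longrightarrow>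
       d_a (d_a f) 0 0 1 + d_a (d_b f) 0 0 1 = 0 \<longrightarrow>
       (\<exists>l\<ge>0. f = (\<lambda>a b c. l * eD_inf a b c))) \<and>
   extremal P_sym_plus eD_inf"
  using extremal_eD not_extremal_P_plus_eD P_sym_plus_zeros_t11_imp_eD P_sym_plus_flat_111_imp_eD_1
    P_sym_plus_flat_001_imp_eD_inf extremal_eD_inf
  by (auto simp: eD_def)

end
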